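(* Let $n\ge3$. There exist vectors $a_1,\dots,a_n\in H_0$ with $a_1+\dots+a_n=0$ and $\mathrm{Span}\{a_i\}=H_0$ such that the polar dual (inside $H_0$) of $Root_n^a:=\mathrm{Conv}\{a_i-a_j:1\le i\ne j\le n\}$ is the polytope $$\Delta_{\mathcal F}=\sum_{i=1}^n[\hat e_i,\hat e_{i+1}]=\sum_{i=1}^n[0,\hat e_{i+1}-\hat e_i]\subset H_0,$$ where $\hat e_{n+1}:=\hat e_1$.
   Context: $H_0=\{x\in\mathbb{R}^n:\sum x_i=0\}$, $\hat e_i=e_i-\frac1n(e_1+\dots+e_n)$. Polar dual inside $H_0$: $K^\circ=\{y\in H_0:\langle y,x\rangle\le1\ \forall x\in K\}$. The polytope $\Delta_{\mathcal F}$ is the translate into $H_0$ of the Minkowski sum $\sum_{i=1}^n[e_i,e_{i+1}]$ associated to the hypergraph $\mathcal F=\{\{1,2\},\dots,\{n-1,n\},\{n,1\}\}$. *)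

theory Defs
  imports "HOL-Analysis.Analysis"
begin

text \<open>Coordinates are
identified with the indices 0..n-1 by an enumeration idx (a bijection
{..<n} -> UNIV); index i in the paper corresponds to idx (i-1).\<close>

definition H0 :: "(real^'n) set" where
  "H0 = {x. (\<Sum>j\<in>UNIV. x $ j) = 0}"

definition polar_H0 :: "(real^'n) set \<Rightarrow> (real^'n) set" where
  "polar_H0 K = {y \<in> H0. \<forall>x\<in>K. inner y x \<le> 1}"

definition ehat :: "'n \<Rightarrow> real^'n" where
  "ehat i = axis i 1 - (1 / real CARD('n)) *\<^sub>R (\<chi> j. 1)"

definition minkowski_sum :: "nat \<Rightarrow> (nat \<Rightarrow> (real^'n) set) \<Rightarrow> (real^'n) set" where
  "minkowski_sum m S = {(\<Sum>i<m. x i) | x. \<forall>i<m. x i \<in> S i}"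

definition Root_a :: "nat \<Rightarrow> (nat \<Rightarrow> real^'n) \<Rightarrow> (real^'n) set" where
  "Root_a m a = convex hull {a i - a j | i j. i < m \<and> j < m \<and> i \<noteq> j}"

end

theory Submission
  imports Defs
begin

text \<open>Take for a_p the partial sums e_1 + ... + e_p of the vectors \<open>ehat\<close>, centred
so that they add up to 0. For y in H_0 one has <y, a_p - a_q> = S_p - S_q with
S_p = y_1 + ... + y_p, so the polar of Root_n^a consists of the y whose prefix sums
oscillate by at most 1. A point y = \<Sum> t_i (e_{i+1} - e_i) has coordinates
y_k = t_{k-1} - t_k (indices mod n), hence S_p = t_n - t_p, whose oscillation is at most 1
when all t_i lie in [0,1]; conversely t_i = max S - S_{i+1} recovers y. Finally the
segments [e_i, e_{i+1}] are translates of [0, e_{i+1} - e_i] by vectors summing to 0.\<close>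

lemma subspace_H0: "subspace H0"
  unfolding subspace_def H0_def
  by (auto simp: sum.distrib sum_distrib_left[symmetric])

lemma ehat_component: "ehat (i::'n::finite) $ j = (if j = i then 1 else 0) - 1 / real CARD('n)"
  by (simp add: ehat_def axis_def)

lemma ehat_in_H0: "ehat (i::'n::finite) \<in> H0"
  by (simp add: H0_def ehat_component sum_subtractf)

lemma sum_ehat: "(\<Sum>j\<in>UNIV. ehat j) = (0 :: real^'n::finite)"
  by (simp add: vec_eq_iff sum_component ehat_component sum_subtractf)

lemma ehat_component_commute: "ehat (i::'n::finite) $ j = ehat j $ i"
  by (simp add: ehat_component eq_commute)

lemma sum_mult_ehat_component:
  fixes i :: "'n::finite"
  shows "(\<Sum>j\<in>UNIV. c j * ehat j $ i) = c i - (\<Sum>j\<in>UNIV. c j) / real CARD('n)"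
proof -
  have "(\<Sum>j\<in>UNIV. c j * ehat j $ i) = (\<Sum>j\<in>UNIV. (if j = i then c j else 0) - c j / real CARD('n))"
    by (rule sum.cong) (auto simp: ehat_component algebra_simps)
  then show ?thesis by (simp add: sum_subtractf sum_divide_distrib)
qed

lemma inner_ehat_H0:
  assumes "y \<in> H0"
  shows "inner y (ehat (j::'n::finite)) = y $ j"
  using assms sum_mult_ehat_component[of "\<lambda>i. y $ i" j]
  by (simp add: H0_def inner_vec_def ehat_component_commute[of j])

lemma H0_sum_coord_ehat:
  assumes "x \<in> H0"
  shows "(\<Sum>j\<in>UNIV. x $ j *\<^sub>R ehat j) = (x :: real^'n::finite)"
  using assms sum_mult_ehat_component[of "\<lambda>j. x $ j"]
  by (simp add: vec_eq_iff sum_component H0_def)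

lemma span_ehat: "span (range ehat) = (H0 :: (real^'n::finite) set)"
proof
  show "span (range ehat) \<subseteq> (H0 :: (real^'n) set)"
    by (rule span_minimal) (auto intro: subspace_H0 ehat_in_H0)
  show "H0 \<subseteq> span (range (ehat :: 'n \<Rightarrow> _))"
  proof
    fix x :: "real^'n" assume "x \<in> H0"
    then have "x = (\<Sum>j\<in>UNIV. x $ j *\<^sub>R ehat j)" by (simp add: H0_sum_coord_ehat)
    also have "\<dots> \<in> span (range ehat)" by (intro span_sum span_mul span_base) simp
    finally show "x \<in> span (range ehat)" .
  qed
qed

lemma polar_H0_convex_hull: "polar_H0 (convex hull G) = {y \<in> H0. \<forall>g\<in>G. inner y g \<le> 1}"
proof -
  have "convex hull G \<subseteq> {x. inner y x \<le> 1}" if "\<forall>g\<in>G. inner y g \<le> 1" for y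
    by (rule hull_minimal) (use that convex_halfspace_le in auto)
  then show ?thesis unfolding polar_H0_def by (auto dest: hull_inc)
qed

lemma minkowski_sum_translation:
  "minkowski_sum m (\<lambda>i. (+) (c i) ` S i) = (+) (\<Sum>i<m. c i) ` minkowski_sum m S"
proof (intro set_eqI iffI)
  fix v assume "v \<in> minkowski_sum m (\<lambda>i. (+) (c i) ` S i)"
  then obtain x where x: "v = (\<Sum>i<m. x i)" "\<forall>i<m. x i - c i \<in> S i"
    unfolding minkowski_sum_def by force
  then have "(\<Sum>i<m. x i - c i) \<in> minkowski_sum m S" unfolding minkowski_sum_def by blast
  moreover have "v = (\<Sum>i<m. c i) + (\<Sum>i<m. x i - c i)" using x by (simp add: sum_subtractf)
  ultimately show "v \<in> (+) (\<Sum>i<m. c i) ` minkowski_sum m S" by blast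
next
  fix v assume "v \<in> (+) (\<Sum>i<m. c i) ` minkowski_sum m S"
  then obtain x where x: "v = (\<Sum>i<m. c i + x i)" "\<forall>i<m. c i + x i \<in> (+) (c i) ` S i"
    unfolding minkowski_sum_def by (auto simp: sum.distrib)
  then show "v \<in> minkowski_sum m (\<lambda>i. (+) (c i) ` S i)"
    unfolding minkowski_sum_def by blast
qed

lemma minkowski_sum_closed_segment_0:
  "minkowski_sum m (\<lambda>i. closed_segment 0 (D i)) =
     {\<Sum>i<m. t i *\<^sub>R D i | t. \<forall>i<m. t i \<in> {0..1}}"
proof (intro set_eqI iffI)
  fix v assume "v \<in> minkowski_sum m (\<lambda>i. closed_segment 0 (D i))"
  then obtain x where x: "v = (\<Sum>i<m. x i)" "\<forall>i<m. \<exists>u\<in>{0..1}. x i = u *\<^sub>R D i"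
    unfolding minkowski_sum_def closed_segment_def by force
  then obtain t where "\<forall>i<m. t i \<in> {0..1} \<and> x i = t i *\<^sub>R D i" by metis
  with x show "v \<in> {\<Sum>i<m. t i *\<^sub>R D i | t. \<forall>i<m. t i \<in> {0..1}}" by force
next
  fix v assume "v \<in> {\<Sum>i<m. t i *\<^sub>R D i | t. \<forall>i<m. t i \<in> {0..1}}"
  then show "v \<in> minkowski_sum m (\<lambda>i. closed_segment 0 (D i))"
    unfolding minkowski_sum_def closed_segment_def by force
qed

definition pred_mod :: "nat \<Rightarrow> nat \<Rightarrow> nat" where
  "pred_mod n k = (if k = 0 then n - 1 else k - 1)"

lemma pred_mod_less: "k < n \<Longrightarrow> pred_mod n k < n"
  by (auto simp: pred_mod_def)

lemma Suc_mod_eq_iff_pred_mod: "i < n \<Longrightarrow> k < n \<Longrightarrow> Suc i mod n = k \<longleftrightarrow> i = pred_mod n k"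
  by (cases "Suc i = n") (auto simp: pred_mod_def)

lemma Suc_pred_mod: "k < n \<Longrightarrow> Suc (pred_mod n k) mod n = k"
  using Suc_mod_eq_iff_pred_mod pred_mod_less by blast

locale cyclic_enumeration =
  fixes idx :: "nat \<Rightarrow> 'n::finite"
  assumes bij_idx: "bij_betw idx {..<CARD('n)} UNIV"
begin

lemma sum_idx: "(\<Sum>k<CARD('n). f (idx k)) = (\<Sum>j\<in>UNIV. f j)"
  using sum.reindex_bij_betw[OF bij_idx, of f] by simp

lemma idx_eq_iff: "k < CARD('n) \<Longrightarrow> l < CARD('n) \<Longrightarrow> idx k = idx l \<longleftrightarrow> k = l"
  using bij_idx by (auto simp: bij_betw_def inj_on_def)

lemma ex_idx: "\<exists>k<CARD('n). j = idx k"
  using bij_idx by (auto simp: bij_betw_def)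

definition prefix_sum :: "real^'n \<Rightarrow> nat \<Rightarrow> real" where
  "prefix_sum y p = (\<Sum>k<p. y $ idx k)"

definition ehat_prefix :: "nat \<Rightarrow> real^'n" where
  "ehat_prefix p = (\<Sum>k<p. ehat (idx k))"

definition root_generator :: "nat \<Rightarrow> real^'n" where
  "root_generator p = ehat_prefix p - (1 / real CARD('n)) *\<^sub>R (\<Sum>q<CARD('n). ehat_prefix q)"

definition edge :: "nat \<Rightarrow> real^'n" where
  "edge i = ehat (idx (Suc i mod CARD('n))) - ehat (idx i)"

lemma prefix_sum_Suc_mod:
  assumes "y \<in> H0" "k < CARD('n)"
  shows "prefix_sum y (Suc k mod CARD('n)) = prefix_sum y (Suc k)"
proof (cases "Suc k = CARD('n)")
  case True
  with assms(1) sum_idx[of "\<lambda>j. y $ j"] show ?thesis by (simp add: prefix_sum_def H0_def)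
qed (use assms(2) in simp)

lemma ehat_prefix_Suc_mod:
  assumes "k < CARD('n)"
  shows "ehat_prefix (Suc k mod CARD('n)) = ehat_prefix (Suc k)"
proof (cases "Suc k = CARD('n)")
  case True
  with sum_idx[of ehat] show ?thesis by (simp add: ehat_prefix_def sum_ehat)
qed (use assms in simp)

lemma inner_root_generator_diff:
  assumes "y \<in> H0"
  shows "inner y (root_generator p - root_generator q) = prefix_sum y p - prefix_sum y q"
  using assms
  by (simp add: root_generator_def ehat_prefix_def prefix_sum_def inner_diff_right
      inner_sum_right inner_ehat_H0)

lemma polar_Root_a_root_generator:
  "polar_H0 (Root_a CARD('n) root_generator) =
     {y \<in> H0. \<forall>p<CARD('n). \<forall>q<CARD('n). prefix_sum y p - prefix_sum y q \<le> 1}"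
  unfolding Root_a_def polar_H0_convex_hull
  by (force simp: inner_root_generator_diff)

lemma edge_combination_component:
  assumes k: "k < CARD('n)"
  shows "(\<Sum>i<CARD('n). t i *\<^sub>R edge i) $ idx k = t (pred_mod CARD('n) k) - t k"
proof -
  have "(t i *\<^sub>R edge i) $ idx k =
          (if i = pred_mod CARD('n) k then t i else 0) - (if i = k then t i else 0)"
    if i: "i < CARD('n)" for i
  proof -
    have "idx k = idx (Suc i mod CARD('n)) \<longleftrightarrow> i = pred_mod CARD('n) k"
      using idx_eq_iff[OF k, of "Suc i mod CARD('n)"] Suc_mod_eq_iff_pred_mod[OF i k] i by auto
    moreover have "idx k = idx i \<longleftrightarrow> i = k" using idx_eq_iff[OF k i] by auto
    ultimately show ?thesis by (simp add: edge_def ehat_component algebra_simps)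
  qed
  then have "(\<Sum>i<CARD('n). t i *\<^sub>R edge i) $ idx k =
      (\<Sum>i<CARD('n). (if i = pred_mod CARD('n) k then t i else 0) - (if i = k then t i else 0))"
    unfolding sum_component by (intro sum.cong) auto
  also have "\<dots> = t (pred_mod CARD('n) k) - t k"
    using k pred_mod_less[OF k] by (simp add: sum_subtractf)
  finally show ?thesis .
qed

lemma prefix_sum_edge_combination:
  assumes "p < CARD('n)"
  shows "prefix_sum (\<Sum>i<CARD('n). t i *\<^sub>R edge i) p =
           t (CARD('n) - 1) - t (pred_mod CARD('n) p)"
  using assms
proof (induction p)
  case (Suc p)
  have "prefix_sum (\<Sum>i<CARD('n). t i *\<^sub>R edge i) (Suc p) =
          prefix_sum (\<Sum>i<CARD('n). t i *\<^sub>R edge i) p + (\<Sum>i<CARD('n). t i *\<^sub>R edge i) $ idx p"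
    by (simp add: prefix_sum_def)
  with Suc edge_combination_component[of p t] show ?case
    by (simp add: pred_mod_def)
qed (simp add: prefix_sum_def pred_mod_def)

lemma edge_combination_in_polar:
  assumes t: "\<forall>i<CARD('n). t i \<in> {0..1}"
  shows "(\<Sum>i<CARD('n). t i *\<^sub>R edge i) \<in> polar_H0 (Root_a CARD('n) root_generator)"
    (is "?y \<in> _")
proof -
  have "?y \<in> H0"
    unfolding edge_def
    by (intro subspace_sum[OF subspace_H0] subspace_scale[OF subspace_H0]
        subspace_diff[OF subspace_H0] ehat_in_H0)
  moreover have "prefix_sum ?y p - prefix_sum ?y q \<le> 1"
    if "p < CARD('n)" "q < CARD('n)" for p q
  proof -
    have "t (pred_mod CARD('n) q) \<le> 1" "0 \<le> t (pred_mod CARD('n) p)"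
      using t pred_mod_less that by auto
    then show ?thesis
      using prefix_sum_edge_combination[OF that(1), of t]
        prefix_sum_edge_combination[OF that(2), of t]
      by linarith
  qed
  ultimately show ?thesis by (simp add: polar_Root_a_root_generator)
qed

lemma polar_in_edge_combinations:
  assumes "y \<in> polar_H0 (Root_a CARD('n) root_generator)"
  obtains t where "\<forall>i<CARD('n). t i \<in> {0..1}" and "y = (\<Sum>i<CARD('n). t i *\<^sub>R edge i)"
proof -
  have y: "y \<in> H0"
    and osc: "\<And>p q. p < CARD('n) \<Longrightarrow> q < CARD('n) \<Longrightarrow> prefix_sum y p - prefix_sum y q \<le> 1"
    using assms by (auto simp: polar_Root_a_root_generator)
  define M where "M = Max (prefix_sum y ` {..<CARD('n)})"
  have "M \<in> prefix_sum y ` {..<CARD('n)}"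
    unfolding M_def by (rule Max_in) (simp_all add: lessThan_empty_iff)
  then obtain p where p: "p < CARD('n)" "M = prefix_sum y p" by auto
  have M_ge: "prefix_sum y q \<le> M" if "q < CARD('n)" for q
    unfolding M_def using that by (intro Max_ge) auto
  define t where "t i = M - prefix_sum y (Suc i mod CARD('n))" for i
  show thesis
  proof
    show "\<forall>i<CARD('n). t i \<in> {0..1}"
      using M_ge osc[OF p(1)] p(2) by (auto simp: t_def)
    have "(\<Sum>i<CARD('n). t i *\<^sub>R edge i) $ idx k = y $ idx k" if k: "k < CARD('n)" for k
    proof -
      have "(\<Sum>i<CARD('n). t i *\<^sub>R edge i) $ idx k = t (pred_mod CARD('n) k) - t k"
        by (rule edge_combination_component[OF k])
      also have "\<dots> = prefix_sum y (Suc k) - prefix_sum y k"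
        by (simp add: t_def Suc_pred_mod k prefix_sum_Suc_mod[OF y k])
      also have "\<dots> = y $ idx k" by (simp add: prefix_sum_def)
      finally show ?thesis .
    qed
    then show "y = (\<Sum>i<CARD('n). t i *\<^sub>R edge i)"
      by (metis vec_eq_iff ex_idx)
  qed
qed

lemma polar_Root_a_eq_edge_zonotope:
  "polar_H0 (Root_a CARD('n) root_generator) = minkowski_sum CARD('n) (\<lambda>i. closed_segment 0 (edge i))"
  unfolding minkowski_sum_closed_segment_0
proof (intro set_eqI iffI)
  fix y assume "y \<in> polar_H0 (Root_a CARD('n) root_generator)"
  then show "y \<in> {\<Sum>i<CARD('n). t i *\<^sub>R edge i | t. \<forall>i<CARD('n). t i \<in> {0..1}}"
    by (elim polar_in_edge_combinations) blast
qed (auto intro: edge_combination_in_polar)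

lemma minkowski_sum_ehat_segments:
  "minkowski_sum CARD('n) (\<lambda>i. closed_segment (ehat (idx i)) (ehat (idx (Suc i mod CARD('n))))) =
     minkowski_sum CARD('n) (\<lambda>i. closed_segment 0 (edge i))"
proof -
  have "closed_segment (ehat (idx i)) (ehat (idx (Suc i mod CARD('n)))) =
          (+) (ehat (idx i)) ` closed_segment 0 (edge i)" for i
    using closed_segment_translation[of "ehat (idx i)" 0 "edge i"] by (simp add: edge_def)
  moreover have "(\<Sum>i<CARD('n). ehat (idx i)) = 0" by (simp add: sum_idx sum_ehat)
  ultimately show ?thesis by (simp add: minkowski_sum_translation)
qed

lemma root_generator_in_H0: "root_generator p \<in> H0"
  unfolding root_generator_def ehat_prefix_def
  by (intro subspace_diff[OF subspace_H0] subspace_scale[OF subspace_H0]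
      subspace_sum[OF subspace_H0] ehat_in_H0)

lemma sum_root_generator: "(\<Sum>p<CARD('n). root_generator p) = 0"
  unfolding root_generator_def sum_subtractf sum_constant_scaleR by simp

lemma ehat_idx_eq_root_generator_diff:
  assumes "k < CARD('n)"
  shows "ehat (idx k) = root_generator (Suc k mod CARD('n)) - root_generator k"
  using assms by (simp add: root_generator_def ehat_prefix_Suc_mod) (simp add: ehat_prefix_def)

lemma span_root_generator: "span (root_generator ` {..<CARD('n)}) = H0"
proof (rule subset_antisym)
  show "span (root_generator ` {..<CARD('n)}) \<subseteq> H0"
    by (rule span_minimal) (auto intro: subspace_H0 root_generator_in_H0)
  have "ehat (idx k) \<in> span (root_generator ` {..<CARD('n)})" if k: "k < CARD('n)" for k
  proof -
    have "Suc k mod CARD('n) < CARD('n)" by simp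
    with k show ?thesis
      unfolding ehat_idx_eq_root_generator_diff[OF k] by (blast intro: span_diff span_base)
  qed
  then have "range ehat \<subseteq> span (root_generator ` {..<CARD('n)})"
    by (metis ex_idx image_subsetI)
  then show "H0 \<subseteq> span (root_generator ` {..<CARD('n)})"
    unfolding span_ehat[symmetric] by (intro span_minimal subspace_span)
qed

end

theorem mainTheorem11:
  fixes idx :: "nat \<Rightarrow> 'n::finite"
  assumes "CARD('n) \<ge> 3"
    and "bij_betw idx {..<CARD('n)} UNIV"
  shows "\<exists>a :: nat \<Rightarrow> real^'n.
           (\<forall>i<CARD('n). a i \<in> H0) \<and>
           (\<Sum>i<CARD('n). a i) = 0 \<and>
           span (a ` {..<CARD('n)}) = H0 \<and>
           polar_H0 (Root_a CARD('n) a) =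
             minkowski_sum CARD('n)
               (\<lambda>i. closed_segment (ehat (idx i)) (ehat (idx (Suc i mod CARD('n))))) \<and>
           polar_H0 (Root_a CARD('n) a) =
             minkowski_sum CARD('n)
               (\<lambda>i. closed_segment 0 (ehat (idx (Suc i mod CARD('n))) - ehat (idx i)))"
proof -
  \<comment> \<open>The construction works for every \<open>n \<ge> 1\<close>.\<close>
  interpret cyclic_enumeration idx
    by unfold_locales (fact assms(2))
  show ?thesis
    using root_generator_in_H0 sum_root_generator span_root_generator
      polar_Root_a_eq_edge_zonotope minkowski_sum_ehat_segments
    by (intro exI[of _ root_generator]) (simp add: edge_def)
qed

end
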